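(* Let $Q(t)$, $t\ge0$, be the queue-length process of an $M/M/1$ queue with arrival rate $\tilde\lambda>0$ and service rate $\mu>\tilde\lambda$, let $\rho=\tilde\lambda/\mu$, and let $R=\min\{t\ge0:Q(t)=0\}$. Then for every $n\in\mathbb N$ and $b>0$, $$\mathbb P\bigl(R>nb\mid Q(0)=n\bigr)\le\rho^{-n/2}\exp\Bigl(-nb\bigl(\tilde\lambda+\mu-\sqrt{b^{-2}+4\tilde\lambda\mu}\bigr)\Bigr).$$ *)

theory Defs
  imports "HOL-Probability.Probability"
begin

(* M/M/1 queue constructed by uniformisation: jumps occur at the arrival times of a
   Poisson process of rate lam+mu (i.i.d. Exp(lam+mu) inter-jump times E i);
   the k-th jump is an arrival (S k = True, prob lam/(lam+mu)) or a potential
   service completion (S k = False), which decreases the queue if it is positive. *)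

fun mm1_chain :: "nat \<Rightarrow> (nat \<Rightarrow> 'a \<Rightarrow> bool) \<Rightarrow> nat \<Rightarrow> 'a \<Rightarrow> nat" where
  "mm1_chain n S 0 \<omega> = n"
| "mm1_chain n S (Suc k) \<omega> = (if S k \<omega> then Suc (mm1_chain n S k \<omega>) else mm1_chain n S k \<omega> - 1)"

definition mm1_jump_time :: "(nat \<Rightarrow> 'a \<Rightarrow> real) \<Rightarrow> nat \<Rightarrow> 'a \<Rightarrow> real" where
  "mm1_jump_time E k \<omega> = (\<Sum>i<k. E i \<omega>)"

definition mm1_queue :: "nat \<Rightarrow> (nat \<Rightarrow> 'a \<Rightarrow> bool) \<Rightarrow> (nat \<Rightarrow> 'a \<Rightarrow> real) \<Rightarrow> real \<Rightarrow> 'a \<Rightarrow> nat" where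
  "mm1_queue n S E t \<omega> = mm1_chain n S (card {k. 0 < k \<and> mm1_jump_time E k \<omega> \<le> t}) \<omega>"

(* R = min {t >= 0. Q(t) = 0}, valued in ereal (infinity if never empty) *)
definition mm1_R :: "nat \<Rightarrow> (nat \<Rightarrow> 'a \<Rightarrow> bool) \<Rightarrow> (nat \<Rightarrow> 'a \<Rightarrow> real) \<Rightarrow> 'a \<Rightarrow> ereal" where
  "mm1_R n S E \<omega> = Inf {ereal t | t. 0 \<le> t \<and> mm1_queue n S E t \<omega> = 0}"

end

theory Submission
  imports Defs
begin

(* If R > t, no jump up to time t has emptied the queue, so up to the last such jump, say the
   k-th, the queue moves like the free +-1 random walk X started at n; as z = sqrt (mu / lam) >= 1,
   this gives 1 <= z ^ X_k. Hence P(R > t) <= E[z ^ X_N], where the number N of jumps in (0, t] is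
   Poisson((lam + mu) t) and independent of the jump directions. Each direction contributes the
   factor E[z ^ (+-1)] = 2 sqrt (lam mu) / (lam + mu), so P(R > t) <= z ^ n exp (- t (sqrt mu -
   sqrt lam)^2). This is sharper than the stated bound, as 2 sqrt (lam mu) <= sqrt (1 / b^2 + 4 lam mu). *)

lemma crossing_index_exists:
  fixes f :: "nat \<Rightarrow> 'b::linorder"
  assumes "f 0 \<le> t" and "t < f m"
  shows "\<exists>k. f k \<le> t \<and> t < f (Suc k)"
proof (rule ccontr)
  assume "\<nexists>k. f k \<le> t \<and> t < f (Suc k)"
  then have "f k \<le> t" for k
    using assms(1) by (induction k) (auto simp: not_less)
  with assms(2) show False by (simp add: not_less[symmetric])
qed

lemma poisson_generating_function_sums:
  fixes a c :: real
  shows "(\<lambda>k. a ^ k / fact k * exp (- a) * c ^ k) sums exp (a * (c - 1))"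
proof -
  have "(\<lambda>k. exp (- a) * ((a * c) ^ k / fact k)) sums (exp (- a) * exp (a * c))"
    using exp_converges[of "a * c"] by (intro sums_mult) (simp add: divide_inverse mult.commute)
  moreover have "exp (- a) * exp (a * c) = exp (a * (c - 1))"
    by (simp add: exp_add[symmetric] algebra_simps)
  ultimately show ?thesis by (simp add: power_mult_distrib mult_ac)
qed

lemma sqrt_ratio_weighted_sum:
  fixes lam mu :: real
  assumes "0 < lam" and "0 < mu"
  shows "sqrt (mu / lam) * lam + inverse (sqrt (mu / lam)) * mu = 2 * sqrt (lam * mu)"
proof -
  define p q where "p = sqrt lam" and "q = sqrt mu"
  have "0 < p" "0 < q" "lam = p\<^sup>2" "mu = q\<^sup>2"
    using assms by (simp_all add: p_def q_def)
  moreover have "sqrt (q\<^sup>2 / p\<^sup>2) = q / p" and "sqrt (p\<^sup>2 * q\<^sup>2) = p * q"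
    using \<open>0 < p\<close> \<open>0 < q\<close> by (simp_all add: real_sqrt_divide real_sqrt_mult)
  ultimately show ?thesis
    by (simp add: field_simps power2_eq_square)
qed

lemma measurable_sigma_preimages:
  assumes "\<And>j. X j \<in> measurable M N"
  shows "X i \<in> measurable (sigma (space M) (\<Union>j. {X j -` A \<inter> space M | A. A \<in> sets N})) N"
proof -
  let ?G = "\<Union>j. {X j -` A \<inter> space M | A. A \<in> sets N}"
  have G: "?G \<subseteq> Pow (space M)" by auto
  show ?thesis
  proof (rule measurableI)
    fix x assume "x \<in> space (sigma (space M) ?G)"
    then show "X i x \<in> space N"
      using assms[of i] space_measure_of[OF G] by (auto simp: measurable_def)
  next
    fix A assume "A \<in> sets N"
    then have "X i -` A \<inter> space M \<in> ?G" by blast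
    then show "X i -` A \<inter> space (sigma (space M) ?G) \<in> sets (sigma (space M) ?G)"
      using space_measure_of[OF G] sets_measure_of[OF G] by (auto intro: sigma_sets.Basic)
  qed
qed

context prob_space
begin

lemma nn_integral_mult_indep_set:
  fixes X Y :: "'a \<Rightarrow> ennreal"
  assumes indep: "indep_set (sigma_sets (space M) A) (sigma_sets (space M) B)"
    and A: "A \<subseteq> Pow (space M)" and B: "B \<subseteq> Pow (space M)"
    and X: "X \<in> borel_measurable (sigma (space M) A)"
    and Y: "Y \<in> borel_measurable (sigma (space M) B)"
  shows "(\<integral>\<^sup>+\<omega>. X \<omega> * Y \<omega> \<partial>M) = (\<integral>\<^sup>+\<omega>. X \<omega> \<partial>M) * (\<integral>\<^sup>+\<omega>. Y \<omega> \<partial>M)"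
proof -
  have X_M: "X \<in> borel_measurable M" and Y_M: "Y \<in> borel_measurable M"
    using measurable_mono[of borel borel "sigma (space M) A" M] X
      measurable_mono[of borel borel "sigma (space M) B" M] Y
      indep_setD_ev1[OF indep] indep_setD_ev2[OF indep] A B
    by auto
  have "sigma_sets (space M) {X -` U \<inter> space M | U. U \<in> sets borel} \<subseteq> sigma_sets (space M) A"
    using measurable_sets[OF X] sets_measure_of[OF A] space_measure_of[OF A]
    by (intro sigma_sets_mono) auto
  moreover have "sigma_sets (space M) {Y -` U \<inter> space M | U. U \<in> sets borel} \<subseteq> sigma_sets (space M) B"
    using measurable_sets[OF Y] sets_measure_of[OF B] space_measure_of[OF B]
    by (intro sigma_sets_mono) auto
  ultimately have "indep_set (sigma_sets (space M) {X -` U \<inter> space M | U. U \<in> sets borel})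
      (sigma_sets (space M) {Y -` U \<inter> space M | U. U \<in> sets borel})"
    using indep unfolding indep_set_def
    by (rule_tac indep_sets_mono_sets) (auto split: bool.split)
  then have "indep_var borel X borel Y"
    using X_M Y_M by (simp add: indep_var_eq)
  then have "indep_vars (\<lambda>_. borel) (case_bool X Y) UNIV"
    unfolding indep_var_def by (rule indep_vars_cong[THEN iffD1, rotated 3]) (auto split: bool.split)
  from indep_vars_nn_integral[OF _ this]
  show ?thesis by (simp add: UNIV_bool mult.commute)
qed

lemma nn_integral_two_valued:
  assumes [measurable]: "P \<in> measurable M (count_space UNIV)" and "0 \<le> a" and "0 \<le> b"
  shows "(\<integral>\<^sup>+\<omega>. ennreal (if P \<omega> then a else b) \<partial>M)
    = ennreal (a * prob {\<omega> \<in> space M. P \<omega>} + b * (1 - prob {\<omega> \<in> space M. P \<omega>}))"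
proof -
  let ?A = "{\<omega> \<in> space M. P \<omega>}"
  have "(\<integral>\<^sup>+\<omega>. ennreal (if P \<omega> then a else b) \<partial>M)
      = (\<integral>\<^sup>+\<omega>. ennreal a * indicator ?A \<omega> + ennreal b * indicator (space M - ?A) \<omega> \<partial>M)"
    by (intro nn_integral_cong) (auto simp: indicator_def)
  also have "\<dots> = ennreal a * emeasure M ?A + ennreal b * emeasure M (space M - ?A)"
    by (subst nn_integral_add) (auto simp: nn_integral_cmult_indicator)
  also have "\<dots> = ennreal (a * prob ?A + b * (1 - prob ?A))"
    using assms(2,3) prob_compl[of ?A] prob_le_1[of ?A]
    by (simp add: emeasure_eq_measure flip: ennreal_mult ennreal_plus)
  finally show ?thesis .
qed

lemma AE_exponential_pos:
  assumes "distributed M lborel X (exponential_density l)" and "0 < l"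
  shows "AE \<omega> in M. 0 < X \<omega>"
proof -
  have X[measurable]: "X \<in> borel_measurable M"
    using distributed_measurable[OF assms(1)] by simp
  have "emeasure M {\<omega> \<in> space M. X \<omega> \<le> 0} = 0"
    using exponential_distributedD_le[OF assms(1) order_refl assms(2)]
    by (simp add: emeasure_eq_measure)
  then show ?thesis
    by (subst AE_iff_measurable[of "{\<omega> \<in> space M. X \<omega> \<le> 0}"]) (auto simp: not_less)
qed

end

section \<open>Sample paths of the uniformised queue\<close>

lemma mm1_jump_time_0 [simp]: "mm1_jump_time E 0 \<omega> = 0"
  by (simp add: mm1_jump_time_def)

lemma mm1_jump_time_Suc [simp]: "mm1_jump_time E (Suc k) \<omega> = mm1_jump_time E k \<omega> + E k \<omega>"
  by (simp add: mm1_jump_time_def)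

lemma strict_mono_mm1_jump_time:
  assumes "\<forall>i. 0 < E i \<omega>"
  shows "strict_mono (\<lambda>k. mm1_jump_time E k \<omega>)"
  using assms by (intro strict_monoI_Suc) simp

lemma mm1_queue_at_jump_time:
  assumes "\<forall>i. 0 < E i \<omega>"
  shows "mm1_queue n S E (mm1_jump_time E k \<omega>) \<omega> = mm1_chain n S k \<omega>"
proof -
  have "{j. 0 < j \<and> mm1_jump_time E j \<omega> \<le> mm1_jump_time E k \<omega>} = {1..k}"
    using strict_mono_less_eq[OF strict_mono_mm1_jump_time[of E \<omega>, OF assms]] by auto
  then show ?thesis by (simp add: mm1_queue_def)
qed

lemma mm1_R_le_jump_time:
  assumes "\<forall>i. 0 < E i \<omega>" and "mm1_chain n S k \<omega> = 0"
  shows "mm1_R n S E \<omega> \<le> ereal (mm1_jump_time E k \<omega>)"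
proof -
  have "0 \<le> mm1_jump_time E k \<omega>"
    using strict_mono_less_eq[OF strict_mono_mm1_jump_time[of E \<omega>, OF assms(1)], of 0 k] by simp
  then show ?thesis
    unfolding mm1_R_def using assms mm1_queue_at_jump_time[of E \<omega>, OF assms(1)]
    by (intro Inf_lower) auto
qed

lemma mm1_chain_pos_before_R:
  assumes "\<forall>i. 0 < E i \<omega>" and "mm1_jump_time E k \<omega> \<le> t" and "ereal t < mm1_R n S E \<omega>"
    and "j \<le> k"
  shows "0 < mm1_chain n S j \<omega>"
proof (rule ccontr)
  assume "\<not> 0 < mm1_chain n S j \<omega>"
  then have "mm1_R n S E \<omega> \<le> ereal (mm1_jump_time E j \<omega>)"
    using mm1_R_le_jump_time[of E \<omega>, OF assms(1)] by simp
  also have "\<dots> \<le> ereal t"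
    using strict_mono_less_eq[OF strict_mono_mm1_jump_time[of E \<omega>, OF assms(1)]] assms(2,4)
    by (metis ereal_less_eq(3) order_trans)
  finally show False using assms(3) by simp
qed

definition free_walk_power :: "'b::field \<Rightarrow> (nat \<Rightarrow> 'a \<Rightarrow> bool) \<Rightarrow> nat \<Rightarrow> 'a \<Rightarrow> 'b" where
  "free_walk_power z S k \<omega> = (\<Prod>i<k. if S i \<omega> then z else inverse z)"

lemma measurable_free_walk_power [measurable]:
  fixes z :: real
  assumes [measurable]: "\<And>i. S i \<in> measurable N (count_space UNIV)"
  shows "free_walk_power z S k \<in> borel_measurable N"
  unfolding free_walk_power_def[abs_def] by measurable

lemma power_mm1_chain:
  fixes z :: "'b::field"
  assumes "z \<noteq> 0" and "\<And>j. j < k \<Longrightarrow> 0 < mm1_chain n S j \<omega>"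
  shows "z ^ mm1_chain n S k \<omega> = z ^ n * free_walk_power z S k \<omega>"
  using assms(2)
proof (induction k)
  case 0
  then show ?case by (simp add: free_walk_power_def)
next
  case (Suc k)
  then have IH: "z ^ mm1_chain n S k \<omega> = z ^ n * free_walk_power z S k \<omega>"
    and pos: "0 < mm1_chain n S k \<omega>" by auto
  have "z ^ mm1_chain n S (Suc k) \<omega> = z ^ mm1_chain n S k \<omega> * (if S k \<omega> then z else inverse z)"
    using pos assms(1) by (cases "mm1_chain n S k \<omega>") (auto simp: field_simps)
  then show ?case by (simp add: IH free_walk_power_def mult.assoc)
qed

lemma one_le_free_walk_power_if_mm1_R_gt:
  fixes z :: real
  assumes "1 \<le> z" and "\<forall>i. 0 < E i \<omega>" and "mm1_jump_time E k \<omega> \<le> t"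
    and "ereal t < mm1_R n S E \<omega>"
  shows "1 \<le> z ^ n * free_walk_power z S k \<omega>"
proof -
  have "z ^ n * free_walk_power z S k \<omega> = z ^ mm1_chain n S k \<omega>"
    using assms mm1_chain_pos_before_R[of E \<omega>, OF assms(2-4)] by (intro power_mm1_chain[symmetric]) auto
  then show ?thesis using assms(1) by simp
qed

definition num_jumps_eq :: "(nat \<Rightarrow> 'a \<Rightarrow> real) \<Rightarrow> real \<Rightarrow> nat \<Rightarrow> 'a \<Rightarrow> bool" where
  "num_jumps_eq E t k \<omega> \<longleftrightarrow> mm1_jump_time E k \<omega> \<le> t \<and> t < mm1_jump_time E (Suc k) \<omega>"

lemma measurable_mm1_jump_time [measurable]:
  assumes [measurable]: "\<And>i. E i \<in> borel_measurable N"
  shows "mm1_jump_time E k \<in> borel_measurable N"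
  unfolding mm1_jump_time_def[abs_def] by measurable

lemma pred_num_jumps_eq [measurable]:
  assumes [measurable]: "\<And>i. E i \<in> borel_measurable N"
  shows "Measurable.pred N (num_jumps_eq E t k)"
  unfolding num_jumps_eq_def[abs_def] by measurable

lemma of_bool_mm1_R_gt_le_suminf:
  fixes z :: real
  assumes "1 \<le> z" and "\<forall>i. 0 < E i \<omega>" and "0 \<le> t" and "t < mm1_jump_time E m \<omega>"
  shows "of_bool (ereal t < mm1_R n S E \<omega>)
    \<le> ennreal (z ^ n) * (\<Sum>k. ennreal (of_bool (num_jumps_eq E t k \<omega>) * free_walk_power z S k \<omega>))"
proof (cases "ereal t < mm1_R n S E \<omega>")
  case True
  let ?w = "\<lambda>k. ennreal (of_bool (num_jumps_eq E t k \<omega>) * free_walk_power z S k \<omega>)"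
  obtain k where k: "num_jumps_eq E t k \<omega>"
    using crossing_index_exists[of "\<lambda>k. mm1_jump_time E k \<omega>"] assms(3,4)
    by (auto simp: num_jumps_eq_def)
  then have "1 \<le> z ^ n * free_walk_power z S k \<omega>"
    using one_le_free_walk_power_if_mm1_R_gt[OF assms(1,2) _ True] by (simp add: num_jumps_eq_def)
  then have "of_bool (ereal t < mm1_R n S E \<omega>) \<le> ennreal (z ^ n) * ?w k"
    using True k assms(1) by (simp flip: ennreal_mult')
  also have "\<dots> \<le> ennreal (z ^ n) * (\<Sum>k. ?w k)"
    using sum_le_suminf[of ?w "{k}"] by (intro mult_left_mono) simp_all
  finally show ?thesis .
qed simp

section \<open>Counting exponential jump times\<close>

context prob_space
begin

context
  fixes l :: real and E :: "nat \<Rightarrow> 'a \<Rightarrow> real"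
  assumes rate_pos: "0 < l"
    and exponential_E: "\<And>i. distributed M lborel (E i) (exponential_density l)"
    and indep_E: "indep_vars (\<lambda>_. borel) E UNIV"
begin

(* Not declared [measurable]: exported from this context, the rule would apply to every E. *)
lemma measurable_E: "E i \<in> borel_measurable M"
  using distributed_measurable[OF exponential_E] by simp

lemma AE_mm1_jump_times_pos: "AE \<omega> in M. \<forall>i. 0 < E i \<omega>"
  using AE_exponential_pos[OF exponential_E rate_pos] by (simp add: AE_all_countable)

lemma prob_mm1_jump_time_le:
  assumes "0 \<le> t"
  shows "prob {\<omega> \<in> space M. mm1_jump_time E k \<omega> \<le> t}
    = 1 - (\<Sum>j<k. (l * t) ^ j / fact j * exp (- (l * t)))"
proof (cases k)
  case 0
  then show ?thesis using assms by (simp add: prob_space)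
next
  case (Suc m)
  have "distributed M lborel (\<lambda>\<omega>. mm1_jump_time E k \<omega>) (erlang_density (card {..<k} - 1) l)"
    unfolding mm1_jump_time_def
    by (rule exponential_distributed_sum)
      (use Suc in \<open>auto intro: rate_pos exponential_E indep_vars_subset[OF indep_E]\<close>)
  then have "prob {\<omega> \<in> space M. mm1_jump_time E k \<omega> \<le> t} = erlang_CDF m l t"
    using erlang_distributed_le[OF _ rate_pos assms] Suc by (simp del: mm1_jump_time_Suc)
  then show ?thesis
    using Suc assms by (simp add: erlang_CDF_def lessThan_Suc_atMost mult_ac)
qed

lemma prob_num_jumps_eq:
  assumes "0 \<le> t"
  shows "prob {\<omega> \<in> space M. num_jumps_eq E t k \<omega>} = (l * t) ^ k / fact k * exp (- (l * t))"
proof -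
  note measurable_E [measurable]
  let ?T = "\<lambda>k. {\<omega> \<in> space M. mm1_jump_time E k \<omega> \<le> t}"
  let ?A = "{\<omega> \<in> space M. num_jumps_eq E t k \<omega>}"
  have "prob (?T k) = prob (?A \<union> ?T (Suc k))"
    using AE_mm1_jump_times_pos
    by (intro finite_measure_eq_AE)
      (auto simp: num_jumps_eq_def elim!: eventually_mono dest: spec[of _ k])
  also have "\<dots> = prob ?A + prob (?T (Suc k))"
    by (rule finite_measure_Union) (auto simp: num_jumps_eq_def)
  finally show ?thesis
    using prob_mm1_jump_time_le[OF assms, of k] prob_mm1_jump_time_le[OF assms, of "Suc k"] by simp
qed

lemma AE_mm1_jump_time_gt: "AE \<omega> in M. \<exists>k. t < mm1_jump_time E k \<omega>"
proof (cases "0 \<le> t")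
  case False
  then show ?thesis by (intro AE_I2 exI[of _ 0]) simp
next
  case True
  note measurable_E [measurable]
  let ?H = "{\<omega> \<in> space M. \<forall>k. mm1_jump_time E k \<omega> \<le> t}"
  let ?p = "\<lambda>j. (l * t) ^ j / fact j * exp (- (l * t))"
  have "?p sums 1"
    using poisson_generating_function_sums[of "l * t" 1] by simp
  then have "(\<lambda>k. 1 - (\<Sum>j<k. ?p j)) \<longlonglongrightarrow> 0"
    unfolding sums_def by (auto intro: tendsto_eq_intros)
  moreover have "prob ?H \<le> 1 - (\<Sum>j<k. ?p j)" for k
    using finite_measure_mono[of ?H "{\<omega> \<in> space M. mm1_jump_time E k \<omega> \<le> t}"]
      prob_mm1_jump_time_le[OF True, of k] by auto
  ultimately have "prob ?H \<le> 0"
    by (intro LIMSEQ_le_const) auto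
  then have "emeasure M ?H = 0"
    by (simp add: emeasure_eq_measure measure_le_0_iff)
  then show ?thesis
    by (subst AE_iff_measurable[of ?H]) (auto simp: not_less)
qed

end

end

section \<open>Exponential tail bound for the emptying time\<close>

locale mm1_uniformisation = prob_space M for M :: "'a measure" +
  fixes lam mu :: real and S :: "nat \<Rightarrow> 'a \<Rightarrow> bool" and E :: "nat \<Rightarrow> 'a \<Rightarrow> real"
  assumes lam_pos: "0 < lam" and lam_less_mu: "lam < mu"
    and measurable_S [measurable]: "\<And>i. S i \<in> measurable M (count_space UNIV)"
    and prob_S: "\<And>i. prob {\<omega> \<in> space M. S i \<omega>} = lam / (lam + mu)"
    and exponential_E: "\<And>i. distributed M lborel (E i) (exponential_density (lam + mu))"
    and indep_S: "indep_vars (\<lambda>_. count_space UNIV) S UNIV"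
    and indep_E: "indep_vars (\<lambda>_. borel) E UNIV"
    and indep_S_E: "indep_set
      (sigma_sets (space M) (\<Union>i. {S i -` A \<inter> space M | A. A \<in> sets (count_space UNIV)}))
      (sigma_sets (space M) (\<Union>i. {E i -` A \<inter> space M | A. A \<in> sets borel}))"
begin

(* tilt minimises the mean lam / (lam + mu) * z + mu / (lam + mu) / z of one step of z ^ Q,
   and step_mean is that minimum. *)
abbreviation tilt :: real where "tilt \<equiv> sqrt (mu / lam)"

abbreviation step_mean :: real where "step_mean \<equiv> 2 * sqrt (lam * mu) / (lam + mu)"

lemma rate_pos: "0 < lam + mu"
  using lam_pos lam_less_mu by simp

lemmas [measurable] = measurable_E[OF rate_pos exponential_E indep_E]

abbreviation sigma_S :: "'a measure" where
  "sigma_S \<equiv> sigma (space M) (\<Union>j. {S j -` A \<inter> space M | A. A \<in> sets (count_space UNIV)})"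

abbreviation sigma_E :: "'a measure" where
  "sigma_E \<equiv> sigma (space M) (\<Union>j. {E j -` A \<inter> space M | A. A \<in> sets borel})"

lemma measurable_S_sigma_S [measurable]: "S i \<in> measurable sigma_S (count_space UNIV)"
  by (rule measurable_sigma_preimages[OF measurable_S])

lemma measurable_E_sigma_E [measurable]: "E i \<in> borel_measurable sigma_E"
  by (rule measurable_sigma_preimages[OF measurable_E[OF rate_pos exponential_E indep_E]])

lemma nn_integral_mult_indep_S_E:
  fixes X Y :: "'a \<Rightarrow> ennreal"
  assumes "X \<in> borel_measurable sigma_S" and "Y \<in> borel_measurable sigma_E"
  shows "(\<integral>\<^sup>+\<omega>. X \<omega> * Y \<omega> \<partial>M) = (\<integral>\<^sup>+\<omega>. X \<omega> \<partial>M) * (\<integral>\<^sup>+\<omega>. Y \<omega> \<partial>M)"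
  by (rule nn_integral_mult_indep_set[OF indep_S_E _ _ assms]) auto

lemma nn_integral_step_weight:
  "(\<integral>\<^sup>+\<omega>. ennreal (if S i \<omega> then tilt else inverse tilt) \<partial>M) = ennreal step_mean"
proof -
  have "1 - lam / (lam + mu) = mu / (lam + mu)"
    using rate_pos by (simp add: field_simps)
  then show ?thesis
    using lam_pos lam_less_mu sqrt_ratio_weighted_sum[of lam mu]
    by (subst nn_integral_two_valued) (simp_all add: prob_S add_divide_distrib[symmetric])
qed

lemma nn_integral_free_walk_power:
  "(\<integral>\<^sup>+\<omega>. ennreal (free_walk_power tilt S k \<omega>) \<partial>M) = ennreal (step_mean ^ k)"
proof -
  let ?w = "\<lambda>i \<omega>. ennreal (if S i \<omega> then tilt else inverse tilt)"
  have "indep_vars (\<lambda>_. borel) ?w {..<k}"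
    by (rule indep_vars_compose2[OF indep_vars_subset[OF indep_S subset_UNIV]]) simp
  then have "(\<integral>\<^sup>+\<omega>. (\<Prod>i<k. ?w i \<omega>) \<partial>M) = (\<Prod>i<k. \<integral>\<^sup>+\<omega>. ?w i \<omega> \<partial>M)"
    by (intro indep_vars_nn_integral) auto
  moreover have "ennreal (free_walk_power tilt S k \<omega>) = (\<Prod>i<k. ?w i \<omega>)" for \<omega>
    using lam_pos lam_less_mu by (subst prod_ennreal) (auto simp: free_walk_power_def)
  ultimately show ?thesis
    using lam_pos lam_less_mu by (simp add: nn_integral_step_weight ennreal_power)
qed

lemma nn_integral_num_jumps_eq_free_walk_power:
  assumes "0 \<le> t"
  shows "(\<integral>\<^sup>+\<omega>. ennreal (of_bool (num_jumps_eq E t k \<omega>) * free_walk_power tilt S k \<omega>) \<partial>M)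
    = ennreal (((lam + mu) * t) ^ k / fact k * exp (- ((lam + mu) * t)) * step_mean ^ k)"
proof -
  have "0 \<le> free_walk_power tilt S k \<omega>" for \<omega>
    using lam_pos lam_less_mu by (auto simp: free_walk_power_def intro: prod_nonneg)
  then have "(\<integral>\<^sup>+\<omega>. ennreal (of_bool (num_jumps_eq E t k \<omega>) * free_walk_power tilt S k \<omega>) \<partial>M)
      = (\<integral>\<^sup>+\<omega>. ennreal (free_walk_power tilt S k \<omega>)
          * ennreal (of_bool (num_jumps_eq E t k \<omega>)) \<partial>M)"
    by (simp add: ennreal_mult mult.commute)
  also have "\<dots> = (\<integral>\<^sup>+\<omega>. ennreal (free_walk_power tilt S k \<omega>) \<partial>M)
      * (\<integral>\<^sup>+\<omega>. ennreal (of_bool (num_jumps_eq E t k \<omega>)) \<partial>M)"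
    by (rule nn_integral_mult_indep_S_E) measurable
  also have "(\<integral>\<^sup>+\<omega>. ennreal (of_bool (num_jumps_eq E t k \<omega>)) \<partial>M)
      = (\<integral>\<^sup>+\<omega>. indicator {\<omega> \<in> space M. num_jumps_eq E t k \<omega>} \<omega> \<partial>M)"
    by (intro nn_integral_cong) (simp add: indicator_def)
  finally show ?thesis
    using lam_pos lam_less_mu assms prob_num_jumps_eq[OF rate_pos exponential_E indep_E assms]
    by (simp add: nn_integral_free_walk_power emeasure_eq_measure mult.commute flip: ennreal_mult)
qed

lemma nn_integral_suminf_num_jumps_eq_free_walk_power:
  assumes "0 \<le> t"
  shows "(\<integral>\<^sup>+\<omega>. (\<Sum>k. ennreal (of_bool (num_jumps_eq E t k \<omega>) * free_walk_power tilt S k \<omega>)) \<partial>M)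
    = ennreal (exp (- t * (lam + mu - 2 * sqrt (lam * mu))))"
proof -
  let ?p = "\<lambda>k. ((lam + mu) * t) ^ k / fact k * exp (- ((lam + mu) * t)) * step_mean ^ k"
  have "?p sums exp ((lam + mu) * t * (step_mean - 1))"
    by (rule poisson_generating_function_sums)
  moreover have "(lam + mu) * t * (step_mean - 1) = - t * (lam + mu - 2 * sqrt (lam * mu))"
    using rate_pos by (simp add: field_simps)
  moreover have "0 \<le> ?p k" for k
    using lam_pos lam_less_mu assms by simp
  ultimately show ?thesis
    by (simp add: nn_integral_suminf nn_integral_num_jumps_eq_free_walk_power[OF assms]
        suminf_ennreal2 sums_iff)
qed

lemma prob_mm1_R_gt_le:
  assumes "0 \<le> t"
  shows "prob {\<omega> \<in> space M. ereal t < mm1_R n S E \<omega>}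
    \<le> tilt ^ n * exp (- t * (lam + mu - 2 * sqrt (lam * mu)))"
proof -
  let ?R = "{\<omega> \<in> space M. ereal t < mm1_R n S E \<omega>}"
  let ?W = "\<lambda>\<omega>. \<Sum>k. ennreal (of_bool (num_jumps_eq E t k \<omega>) * free_walk_power tilt S k \<omega>)"
  have "1 \<le> tilt" and "0 \<le> tilt ^ n * exp (- t * (lam + mu - 2 * sqrt (lam * mu)))"
    using lam_pos lam_less_mu by simp_all
  have "AE \<omega> in M. indicator ?R \<omega> \<le> ennreal (tilt ^ n) * ?W \<omega>"
    using AE_mm1_jump_times_pos[OF rate_pos exponential_E indep_E]
      AE_mm1_jump_time_gt[OF rate_pos exponential_E indep_E, of t]
  proof eventually_elim
    case (elim \<omega>)
    then obtain m where "t < mm1_jump_time E m \<omega>" by blast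
    from of_bool_mm1_R_gt_le_suminf[OF \<open>1 \<le> tilt\<close> elim(1) assms this, of n S]
    show ?case by (rule order_trans[rotated]) (simp add: indicator_def)
  qed
  then have "(\<integral>\<^sup>+\<omega>. indicator ?R \<omega> \<partial>M) \<le> (\<integral>\<^sup>+\<omega>. ennreal (tilt ^ n) * ?W \<omega> \<partial>M)"
    by (rule nn_integral_mono_AE)
  also have "\<dots> = ennreal (tilt ^ n * exp (- t * (lam + mu - 2 * sqrt (lam * mu))))"
    using lam_pos lam_less_mu
    by (simp add: nn_integral_cmult nn_integral_suminf_num_jumps_eq_free_walk_power[OF assms]
        flip: ennreal_mult)
  finally show ?thesis
    using \<open>0 \<le> tilt ^ n * _\<close>
    by (cases "?R \<in> sets M") (simp_all add: emeasure_eq_measure measure_notin_sets)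
qed

end

theorem lemmaC1:
  fixes M :: "'a measure" and lam mu b :: real and n :: nat
    and S :: "nat \<Rightarrow> 'a \<Rightarrow> bool" and E :: "nat \<Rightarrow> 'a \<Rightarrow> real"
  assumes "prob_space M" and "0 < lam" and "lam < mu" and "0 < b"
    and "\<And>i. S i \<in> measurable M (count_space UNIV)"
    and "\<And>i. prob_space.prob M {\<omega> \<in> space M. S i \<omega>} = lam / (lam + mu)"
    and "\<And>i. distributed M lborel (E i) (exponential_density (lam + mu))"
    and "prob_space.indep_vars M (\<lambda>_. count_space UNIV) S UNIV"
    and "prob_space.indep_vars M (\<lambda>_. borel) E UNIV"
    and "prob_space.indep_set M
           (sigma_sets (space M) (\<Union>i. {S i -` A \<inter> space M | A. A \<in> sets (count_space UNIV)}))
           (sigma_sets (space M) (\<Union>i. {E i -` A \<inter> space M | A. A \<in> sets borel}))"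
  shows "prob_space.prob M {\<omega> \<in> space M. mm1_R n S E \<omega> > ereal (real n * b)}
         \<le> (lam / mu) powr (- real n / 2)
            * exp (- (real n * b) * (lam + mu - sqrt (1 / b\<^sup>2 + 4 * lam * mu)))"
proof -
  interpret mm1_uniformisation M lam mu S E
    using assms unfolding mm1_uniformisation_def mm1_uniformisation_axioms_def by blast
  have "2 * sqrt (lam * mu) \<le> sqrt (1 / b\<^sup>2 + 4 * lam * mu)"
    using real_sqrt_le_mono[of "4 * lam * mu" "1 / b\<^sup>2 + 4 * lam * mu"]
    by (simp add: real_sqrt_mult)
  then have exp_le: "exp (- (real n * b) * (lam + mu - 2 * sqrt (lam * mu)))
      \<le> exp (- (real n * b) * (lam + mu - sqrt (1 / b\<^sup>2 + 4 * lam * mu)))"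
    using \<open>0 < b\<close> by (simp add: mult_left_mono)
  have "(lam / mu) powr (- real n / 2) = (mu / lam) powr (real n / 2)"
    using \<open>0 < lam\<close> \<open>lam < mu\<close> by (simp add: powr_minus_divide powr_divide)
  also have "\<dots> = sqrt (mu / lam) powr real n"
    using \<open>0 < lam\<close> \<open>lam < mu\<close> by (simp add: powr_half_sqrt[symmetric] powr_powr)
  also have "\<dots> = sqrt (mu / lam) ^ n"
    using \<open>0 < lam\<close> \<open>lam < mu\<close> by (simp add: powr_realpow)
  finally have powr_eq: "(lam / mu) powr (- real n / 2) = sqrt (mu / lam) ^ n" .
  have "prob {\<omega> \<in> space M. ereal (real n * b) < mm1_R n S E \<omega>}
      \<le> sqrt (mu / lam) ^ n * exp (- (real n * b) * (lam + mu - 2 * sqrt (lam * mu)))"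
    using \<open>0 < b\<close> by (intro prob_mm1_R_gt_le) simp
  also have "\<dots> \<le> sqrt (mu / lam) ^ n * exp (- (real n * b) * (lam + mu - sqrt (1 / b\<^sup>2 + 4 * lam * mu)))"
    using exp_le \<open>0 < lam\<close> \<open>lam < mu\<close> by (intro mult_left_mono) simp_all
  finally show ?thesis
    unfolding powr_eq .
qed

end
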